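(* Let $(E,B,p,\Gamma)$ be a compact graph bundle and $M\subseteq E$ a compact set. If $\operatorname{End}_s(M)=M$, then $M$ is nowhere dense in $E$.
   Context: Compact graph bundle $(E,B,p,\Gamma)$: $E,B$ compact metric, $\Gamma$ a graph (finite union of arcs pairwise disjoint or meeting only at end-points), $p:E\to B$ continuous surjection, locally trivial via homeomorphisms $h:p^{-1}(U)\to U\times\Gamma$ with $\mathrm{pr}_1\circ h=p$ (canonical). Open $n$-star $\Sigma_n$: $n$-star minus its $n$ end-points. Full sub-star: for $N\ge n\ge2$, an open star $\Sigma_n\subseteq\Sigma_N$ with the same central point that is the union of $n$ of the $N$ half-closed branches of $\Sigma_N$. For $E=B\times\Gamma$, $p=\mathrm{pr}_1$, $M$ closed: $x=(x_1,x_2)\in M$ is a strongly star-like interior point if $\operatorname{ord}(x_2,\Gamma)=N\ge2$ and there exist open $O\ni x_1$ in $B$ and an open $N$-star $\Sigma_N\subseteq\Gamma$, an open neighbourhood of $x_2$ with central point $x_2$, with $\mathcal G=M\cap(O\times\Sigma_N)$ satisfying $\mathcal G\cap(\{x_1\}\times\Gamma)=\{x_1\}\times\Sigma_k$, $k\ge2$, $\Sigma_k$ a full sub-star of $\Sigma_N$, and for every $z\in p(\mathcal G)$, $\mathcal G\cap(\{z\}\times\Gamma)=\{z\}\times\Sigma_{k(z),z}$, $2\le k(z)\le k$, $\Sigma_{k(z),z}$ a full sub-star of $\Sigma_k$; in general bundles transferred via canonical homeomorphisms. $\operatorname{Lint}_s(M)$ is the set of such points and $\operatorname{End}_s(M)=M\setminus\operatorname{Lint}_s(M)$.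 *)

theory Defs
  imports "HOL-Analysis.Analysis"
begin

definition is_graph :: "'a::metric_space set \<Rightarrow> bool" where
  "is_graph \<Gamma> \<longleftrightarrow> (\<exists>n::nat. \<exists>g::nat \<Rightarrow> real \<Rightarrow> 'a. n \<ge> 1 \<and>
     (\<forall>i<n. arc (g i)) \<and> \<Gamma> = (\<Union>i<n. path_image (g i)) \<and>
     (\<forall>i<n. \<forall>j<n. i \<noteq> j \<longrightarrow>
        path_image (g i) \<inter> path_image (g j)
          \<subseteq> {pathstart (g i), pathfinish (g i)} \<inter> {pathstart (g j), pathfinish (g j)}))"

definition ord_le :: "'a::metric_space set \<Rightarrow> 'a \<Rightarrow> nat \<Rightarrow> bool" where
  "ord_le X x n \<longleftrightarrow> (\<forall>U. openin (top_of_set X) U \<and> x \<in> U \<longrightarrow>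
     (\<exists>V. openin (top_of_set X) V \<and> x \<in> V \<and> V \<subseteq> U \<and>
          finite ((top_of_set X) frontier_of V) \<and> card ((top_of_set X) frontier_of V) \<le> n))"

definition point_order :: "'a::metric_space set \<Rightarrow> 'a \<Rightarrow> nat \<Rightarrow> bool" where
  "point_order X x N \<longleftrightarrow> ord_le X x N \<and> (\<forall>m<N. \<not> ord_le X x m)"

definition open_star_branches :: "'a::metric_space \<Rightarrow> 'a set set \<Rightarrow> bool" where
  "open_star_branches c bs \<longleftrightarrow> finite bs \<and>
     (\<exists>g :: 'a set \<Rightarrow> real \<Rightarrow> 'a.
        (\<forall>b\<in>bs. arc (g b) \<and> pathstart (g b) = c \<and> b = path_image (g b) - {pathfinish (g b)}) \<and>
        (\<forall>b\<in>bs. \<forall>b'\<in>bs. b \<noteq> b' \<longrightarrow> path_image (g b) \<inter> path_image (g b') = {c}))"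

definition is_open_star :: "'a::metric_space \<Rightarrow> nat \<Rightarrow> 'a set \<Rightarrow> bool" where
  "is_open_star c n S \<longleftrightarrow> (\<exists>bs. open_star_branches c bs \<and> card bs = n \<and> S = \<Union>bs)"

definition full_substar :: "'a::metric_space \<Rightarrow> nat \<Rightarrow> 'a set \<Rightarrow> 'a set \<Rightarrow> bool" where
  "full_substar c n S' S \<longleftrightarrow> (\<exists>bs bs'. open_star_branches c bs \<and> S = \<Union>bs \<and>
      bs' \<subseteq> bs \<and> card bs' = n \<and> S' = \<Union>bs')"

definition ssl_point :: "'b::metric_space set \<Rightarrow> 'g::metric_space set \<Rightarrow> ('b \<times> 'g) set \<Rightarrow> 'b \<times> 'g \<Rightarrow> bool" where
  "ssl_point B \<Gamma> M x \<longleftrightarrow> x \<in> M \<and>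
     (\<exists>N. N \<ge> 2 \<and> point_order \<Gamma> (snd x) N \<and>
       (\<exists>Ob \<Sigma>N. openin (top_of_set B) Ob \<and> fst x \<in> Ob \<and>
          \<Sigma>N \<subseteq> \<Gamma> \<and> openin (top_of_set \<Gamma>) \<Sigma>N \<and> snd x \<in> \<Sigma>N \<and> is_open_star (snd x) N \<Sigma>N \<and>
          (let G = M \<inter> (Ob \<times> \<Sigma>N) in
            \<exists>k \<Sigma>k. k \<ge> 2 \<and> full_substar (snd x) k \<Sigma>k \<Sigma>N \<and>
              G \<inter> ({fst x} \<times> \<Gamma>) = {fst x} \<times> \<Sigma>k \<and>
              (\<forall>z \<in> fst ` G. \<exists>kz \<Sigma>z. 2 \<le> kz \<and> kz \<le> k \<and> full_substar (snd x) kz \<Sigma>z \<Sigma>k \<and>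
                  G \<inter> ({z} \<times> \<Gamma>) = {z} \<times> \<Sigma>z))))"

definition bundle_chart ::
  "'e::metric_space set \<Rightarrow> 'b::metric_space set \<Rightarrow> ('e \<Rightarrow> 'b) \<Rightarrow> 'g::metric_space set \<Rightarrow> 'b set \<Rightarrow> ('e \<Rightarrow> 'b \<times> 'g) \<Rightarrow> bool" where
  "bundle_chart E B p \<Gamma> U h \<longleftrightarrow> openin (top_of_set B) U \<and>
     (\<exists>k. homeomorphism (E \<inter> p -` U) (U \<times> \<Gamma>) h k) \<and>
     (\<forall>e \<in> E \<inter> p -` U. fst (h e) = p e)"

definition compact_graph_bundle ::
  "'e::metric_space set \<Rightarrow> 'b::metric_space set \<Rightarrow> ('e \<Rightarrow> 'b) \<Rightarrow> 'g::metric_space set \<Rightarrow> bool" where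
  "compact_graph_bundle E B p \<Gamma> \<longleftrightarrow> compact E \<and> compact B \<and> is_graph \<Gamma> \<and>
     continuous_on E p \<and> p ` E = B \<and>
     (\<forall>b\<in>B. \<exists>U h. b \<in> U \<and> bundle_chart E B p \<Gamma> U h)"

definition Lint_s ::
  "'e::metric_space set \<Rightarrow> 'b::metric_space set \<Rightarrow> ('e \<Rightarrow> 'b) \<Rightarrow> 'g::metric_space set \<Rightarrow> 'e set \<Rightarrow> 'e set" where
  "Lint_s E B p \<Gamma> M = {x \<in> M. \<exists>U h. p x \<in> U \<and> bundle_chart E B p \<Gamma> U h \<and>
       ssl_point U \<Gamma> (h ` (M \<inter> p -` U)) (h x)}"

definition End_s ::
  "'e::metric_space set \<Rightarrow> 'b::metric_space set \<Rightarrow> ('e \<Rightarrow> 'b) \<Rightarrow> 'g::metric_space set \<Rightarrow> 'e set \<Rightarrow> 'e set" where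
  "End_s E B p \<Gamma> M = M - Lint_s E B p \<Gamma> M"

definition nowhere_dense_in :: "'a::topological_space set \<Rightarrow> 'a set \<Rightarrow> bool" where
  "nowhere_dense_in E M \<longleftrightarrow> (top_of_set E) interior_of ((top_of_set E) closure_of M) = {}"

end

theory Submission
  imports Defs
begin

text \<open>Every nonempty open subset of a graph contains an open 2-star around an interior point
  of an edge, and such a point has order 2. If M had an interior point in E, a local chart
  would carry a product neighbourhood \<open>O \<times> \<Sigma>\<close> of such a star into M; a product of this
  kind makes its central point a strongly star-like interior point with k = 2, so it lies
  in \<open>Lint\<^sub>s(M)\<close>, contradicting \<open>End\<^sub>s(M) = M\<close>.\<close>

lemma arc_subarc:
  fixes g :: "real \<Rightarrow> 'a::topological_space"
  assumes "arc g" "u \<in> {0..1}" "v \<in> {0..1}" "u \<noteq> v"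
  defines "g' \<equiv> \<lambda>x. g ((v - u) * x + u)"
  shows "arc g'" "path_image g' = g ` closed_segment u v"
    "pathstart g' = g u" "pathfinish g' = g v"
proof -
  have im: "(\<lambda>x. (v - u) * x + u) ` {0..1} = closed_segment u v"
    by (simp add: closed_segment_real_eq)
  have seg: "closed_segment u v \<subseteq> {0..1}"
    using assms by (auto simp: closed_segment_eq_real_ivl)
  have "continuous_on {0..1} g'"
    unfolding g'_def
  proof (rule continuous_on_compose2[of "{0..1}" g])
    show "continuous_on {0..1} g" using assms(1) by (simp add: arc_def path_def)
    show "continuous_on {0..1} (\<lambda>x. (v - u) * x + u)" by (intro continuous_intros)
  qed (use im seg in auto)
  moreover have "inj_on g' {0..1}"
  proof (rule inj_onI)
    fix x y :: real assume "x \<in> {0..1}" "y \<in> {0..1}" "g' x = g' y"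
    moreover have "inj_on g {0..1}" using assms(1) by (rule arc_imp_inj_on)
    ultimately have "(v - u) * x + u = (v - u) * y + u"
      using im seg unfolding g'_def by (blast dest: inj_onD)
    then show "x = y" using assms(4) by simp
  qed
  ultimately show "arc g'" by (simp add: arc_def path_def)
  show "path_image g' = g ` closed_segment u v"
    unfolding path_image_def im[symmetric] g'_def by (simp add: image_image)
  show "pathstart g' = g u" "pathfinish g' = g v"
    by (simp_all add: g'_def pathstart_def pathfinish_def)
qed

lemma path_interval_in_open:
  fixes \<gamma> :: "real \<Rightarrow> 'a::topological_space"
  assumes "path \<gamma>" "0 < t0" "t0 < 1" "open Ov" "\<gamma> t0 \<in> Ov"
  obtains e where "0 < e" "0 < t0 - e" "t0 + e < 1" "\<gamma> ` {t0-e..t0+e} \<subseteq> Ov"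
proof -
  have "continuous_on {0<..<1} \<gamma>"
    using assms(1) unfolding path_def by (rule continuous_on_subset) auto
  then have "open ({0<..<1} \<inter> \<gamma> -` Ov)"
    using assms(4) by (intro continuous_open_preimage) auto
  moreover have "t0 \<in> {0<..<1} \<inter> \<gamma> -` Ov" using assms by auto
  ultimately obtain e where e: "0 < e" "{t0-e..t0+e} \<subseteq> {0<..<1} \<inter> \<gamma> -` Ov"
    unfolding open_contains_cball cball_eq_atLeastAtMost by blast
  have "0 < t0 - e" "t0 + e < 1"
    using subsetD[OF e(2), of "t0 - e"] subsetD[OF e(2), of "t0 + e"] e(1) by auto
  moreover have "\<gamma> ` {t0-e..t0+e} \<subseteq> Ov" using e(2) by blast
  ultimately show ?thesis by (rule that[OF e(1)])
qed

lemma path_interior_point_in_open: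
  fixes \<gamma> :: "real \<Rightarrow> 'a::topological_space"
  assumes "path \<gamma>" "open Ov" "path_image \<gamma> \<inter> Ov \<noteq> {}"
  obtains t0 where "0 < t0" "t0 < 1" "\<gamma> t0 \<in> Ov"
proof -
  obtain O' where "open O'" and O': "{0..1} \<inter> \<gamma> -` Ov = {0..1} \<inter> O'"
    using continuous_openin_preimage_gen[OF assms(1)[unfolded path_def] assms(2)]
    unfolding openin_open by blast
  obtain s where "s \<in> {0..1} \<inter> \<gamma> -` Ov"
    using assms(3) unfolding path_image_def by blast
  then have "s \<in> O' \<inter> closure {0<..<1}" unfolding O' by simp
  then have "O' \<inter> {0<..<1} \<noteq> {}"
    using open_Int_closure_eq_empty[OF \<open>open O'\<close>] by blast
  then obtain t0 where t0: "0 < t0" "t0 < 1" "t0 \<in> O'" by auto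
  then have "t0 \<in> {0..1} \<inter> \<gamma> -` Ov" unfolding O' by simp
  with t0 show ?thesis using that by simp
qed

definition free_arc :: "'a::metric_space set \<Rightarrow> (real \<Rightarrow> 'a) \<Rightarrow> bool" where
  "free_arc \<Gamma> \<gamma> \<longleftrightarrow> arc \<gamma> \<and> path_image \<gamma> \<subseteq> \<Gamma> \<and>
     (\<forall>c d. 0 < c \<longrightarrow> c < d \<longrightarrow> d < 1 \<longrightarrow> openin (top_of_set \<Gamma>) (\<gamma> ` {c<..<d}))"

lemma graph_edge_free_arc:
  fixes g :: "nat \<Rightarrow> real \<Rightarrow> 'a::metric_space"
  assumes arcs: "\<forall>i<n. arc (g i)" and \<Gamma>: "\<Gamma> = (\<Union>i<n. path_image (g i))"
    and meet: "\<forall>i<n. \<forall>j<n. i \<noteq> j \<longrightarrow> path_image (g i) \<inter> path_image (g j)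
                 \<subseteq> {pathstart (g i), pathfinish (g i)} \<inter> {pathstart (g j), pathfinish (g j)}"
    and i: "i < n"
  shows "free_arc \<Gamma> (g i)"
  unfolding free_arc_def
proof (intro conjI allI impI)
  have cont: "continuous_on {0..1} (g i)" and inj: "inj_on (g i) {0..1}"
    using arcs i by (auto simp: arc_def path_def)
  show "arc (g i)" "path_image (g i) \<subseteq> \<Gamma>" using arcs i \<Gamma> by auto
  fix c d :: real assume cd: "0 < c" "c < d" "d < 1"
  define C where "C = (\<Union>j\<in>{j. j < n \<and> j \<noteq> i}. path_image (g j)) \<union> g i ` {0..c} \<union> g i ` {d..1}"
  have "compact C"
    unfolding C_def using arcs cd
    by (intro compact_Un compact_UN compact_continuous_image continuous_on_subset[OF cont])
       (auto intro: compact_arc_image)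
  then have "openin (top_of_set \<Gamma>) (\<Gamma> - C)"
    unfolding Diff_eq by (intro openin_open_Int) (simp add: compact_imp_closed open_Compl)
  moreover have "\<Gamma> - C = g i ` {c<..<d}"
  proof
    show "\<Gamma> - C \<subseteq> g i ` {c<..<d}"
    proof
      fix z assume z: "z \<in> \<Gamma> - C"
      then have "z \<in> path_image (g i)" using \<Gamma> unfolding C_def by auto
      then obtain t where "t \<in> {0..1}" "z = g i t" by (auto simp: path_image_def)
      with z show "z \<in> g i ` {c<..<d}" unfolding C_def by force
    qed
    show "g i ` {c<..<d} \<subseteq> \<Gamma> - C"
    proof
      fix z assume "z \<in> g i ` {c<..<d}"
      then obtain t where t: "c < t" "t < d" "z = g i t" by auto
      have t01: "t \<in> {0..1}" using t cd by auto
      then have zi: "z \<in> path_image (g i)" using t by (auto simp: path_image_def)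
      have "z \<notin> path_image (g j)" if "j < n" "j \<noteq> i" for j
      proof
        assume "z \<in> path_image (g j)"
        then have "g i t \<in> {g i 0, g i 1}"
          using meet i that zi t by (auto simp: pathstart_def pathfinish_def)
        then show False using inj t01 t cd by (auto dest: inj_onD)
      qed
      moreover have "z \<notin> g i ` ({0..c} \<union> {d..1})"
        using inj t01 t cd by (auto dest: inj_onD)
      ultimately show "z \<in> \<Gamma> - C" using zi i \<Gamma> unfolding C_def by auto
    qed
  qed
  ultimately show "openin (top_of_set \<Gamma>) (g i ` {c<..<d})" by simp
qed

lemma free_arc_interval_in_openin:
  assumes free: "free_arc \<Gamma> \<gamma>" and U: "openin (top_of_set \<Gamma>) U"
    and t0: "0 < t0" "t0 < 1" "\<gamma> t0 \<in> U"
  obtains e where "0 < e" "0 < t0 - e" "t0 + e < 1" "\<gamma> ` {t0-e..t0+e} \<subseteq> U"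
proof -
  obtain Ov where "open Ov" and U_eq: "U = \<Gamma> \<inter> Ov" using U unfolding openin_open by blast
  moreover have "path \<gamma>" and sub: "path_image \<gamma> \<subseteq> \<Gamma>"
    using free unfolding free_arc_def arc_def by auto
  ultimately obtain e where e: "0 < e" "0 < t0 - e" "t0 + e < 1" "\<gamma> ` {t0-e..t0+e} \<subseteq> Ov"
    using path_interval_in_open[OF _ t0(1,2)] t0(3) by blast
  have "\<gamma> ` {t0-e..t0+e} \<subseteq> path_image \<gamma>"
    using e(2,3) unfolding path_image_def by (intro image_mono) auto
  with e sub U_eq show ?thesis using that by blast
qed

lemma is_open_star_arc_interval:
  fixes \<gamma> :: "real \<Rightarrow> 'a::metric_space"
  assumes arc: "arc \<gamma>" and ab: "0 \<le> a" "a < t0" "t0 < b" "b \<le> 1"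
  shows "is_open_star (\<gamma> t0) 2 (\<gamma> ` {a<..<b})"
proof -
  have inj: "inj_on \<gamma> {0..1}" using arc by (rule arc_imp_inj_on)
  define g where "g s = (\<lambda>x. \<gamma> ((s - t0) * x + t0))" for s
  define \<beta> where "\<beta> s = \<gamma> ` (closed_segment t0 s - {s})" for s
  have branch: "arc (g s) \<and> pathstart (g s) = \<gamma> t0 \<and> \<beta> s = path_image (g s) - {pathfinish (g s)}"
    if "s \<in> {0..1}" "s \<noteq> t0" for s
  proof -
    have "t0 \<in> {0..1}" using ab by auto
    note sub = arc_subarc[OF arc this that(1) that(2)[symmetric], folded g_def]
    have "\<beta> s = \<gamma> ` closed_segment t0 s - \<gamma> ` {s}"
      unfolding \<beta>_def using that \<open>t0 \<in> {0..1}\<close>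
      by (intro inj_on_image_set_diff[OF inj]) (auto simp: closed_segment_eq_real_ivl)
    then show ?thesis using sub by simp
  qed
  have \<beta>a: "\<beta> a = \<gamma> ` {a<..t0}" and \<beta>b: "\<beta> b = \<gamma> ` {t0..<b}"
    using ab by (auto simp: \<beta>_def closed_segment_eq_real_ivl intro!: arg_cong[where f="image \<gamma>"])
  have meet: "path_image (g a) \<inter> path_image (g b) = {\<gamma> t0}"
  proof -
    have "path_image (g a) \<inter> path_image (g b) = \<gamma> ` {a..t0} \<inter> \<gamma> ` {t0..b}"
      using arc_subarc(2)[OF arc, of t0 a] arc_subarc(2)[OF arc, of t0 b] ab
      by (simp add: g_def closed_segment_eq_real_ivl)
    also have "\<dots> = \<gamma> ` ({a..t0} \<inter> {t0..b})"
      by (rule inj_on_image_Int[OF inj, symmetric]) (use ab in auto)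
    also have "{a..t0} \<inter> {t0..b} = {t0}" using ab by auto
    finally show ?thesis by simp
  qed
  have "\<gamma> ((t0 + b) / 2) \<in> \<beta> b - \<beta> a"
    using ab inj unfolding \<beta>a \<beta>b by (auto dest: inj_onD)
  then have ne: "\<beta> a \<noteq> \<beta> b" by blast
  have "open_star_branches (\<gamma> t0) {\<beta> a, \<beta> b}"
    unfolding open_star_branches_def
  proof (intro conjI exI[of _ "\<lambda>B. if B = \<beta> a then g a else g b"])
    show "\<forall>B\<in>{\<beta> a, \<beta> b}. \<forall>B'\<in>{\<beta> a, \<beta> b}. B \<noteq> B' \<longrightarrow>
        path_image (if B = \<beta> a then g a else g b) \<inter> path_image (if B' = \<beta> a then g a else g b) = {\<gamma> t0}"
      using meet by (auto simp: Int_commute)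
  qed (use branch[of a] branch[of b] ab ne in auto)
  moreover have "\<gamma> ` {a<..<b} = \<beta> a \<union> \<beta> b"
    unfolding \<beta>a \<beta>b image_Un[symmetric] using ab by (intro arg_cong[where f="image \<gamma>"]) auto
  ultimately show ?thesis
    unfolding is_open_star_def using ne by (intro exI[of _ "{\<beta> a, \<beta> b}"]) auto
qed

lemma free_arc_frontier_of_interval:
  assumes "free_arc \<Gamma> \<gamma>" and cd: "0 < c" "c < d" "d < 1"
  shows "(top_of_set \<Gamma>) frontier_of (\<gamma> ` {c<..<d}) \<subseteq> {\<gamma> c, \<gamma> d}"
proof -
  have arc: "arc \<gamma>" and sub: "path_image \<gamma> \<subseteq> \<Gamma>"
    and op: "openin (top_of_set \<Gamma>) (\<gamma> ` {c<..<d})"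
    using assms unfolding free_arc_def by auto
  have "continuous_on {0..1} \<gamma>" using arc by (simp add: arc_def path_def)
  then have "continuous_on {c..d} \<gamma>" by (rule continuous_on_subset) (use cd in auto)
  then have "compact (\<gamma> ` {c..d})" by (rule compact_continuous_image) simp
  moreover have "\<gamma> ` {c..d} \<subseteq> \<Gamma>" using sub cd unfolding path_image_def by auto
  ultimately have "closedin (top_of_set \<Gamma>) (\<gamma> ` {c..d})"
    by (intro closed_subset compact_imp_closed)
  then have "(top_of_set \<Gamma>) closure_of (\<gamma> ` {c<..<d}) \<subseteq> \<gamma> ` {c..d}"
    by (rule closure_of_minimal[rotated]) auto
  then have "(top_of_set \<Gamma>) frontier_of (\<gamma> ` {c<..<d}) \<subseteq> \<gamma> ` {c..d} - \<gamma> ` {c<..<d}"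
    unfolding frontier_of_def interior_of_openin[OF op] by blast
  also have "\<dots> \<subseteq> \<gamma> ` ({c..d} - {c<..<d})" by blast
  also have "{c..d} - {c<..<d} = {c, d}" using cd by auto
  finally show ?thesis by simp
qed

lemma ord_le_mono: "ord_le X x m \<Longrightarrow> m \<le> k \<Longrightarrow> ord_le X x k"
  unfolding ord_le_def by (meson le_trans)

lemma free_arc_ord_le_2:
  assumes free: "free_arc \<Gamma> \<gamma>" and t0: "0 < t0" "t0 < 1"
  shows "ord_le \<Gamma> (\<gamma> t0) 2"
  unfolding ord_le_def
proof (intro allI impI, elim conjE)
  fix U assume "openin (top_of_set \<Gamma>) U" "\<gamma> t0 \<in> U"
  then obtain e where e: "0 < e" "0 < t0 - e" "t0 + e < 1" "\<gamma> ` {t0-e..t0+e} \<subseteq> U"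
    using free_arc_interval_in_openin[OF free _ t0] by blast
  define V where "V = \<gamma> ` {t0-e<..<t0+e}"
  have "openin (top_of_set \<Gamma>) V" "\<gamma> t0 \<in> V"
    using free e unfolding V_def free_arc_def by auto
  moreover have "V \<subseteq> U" using e(4) unfolding V_def by auto
  moreover have F: "(top_of_set \<Gamma>) frontier_of V \<subseteq> {\<gamma> (t0-e), \<gamma> (t0+e)}"
    unfolding V_def using e by (intro free_arc_frontier_of_interval[OF free]) auto
  then have "finite ((top_of_set \<Gamma>) frontier_of V)" by (rule finite_subset) simp
  moreover have "card ((top_of_set \<Gamma>) frontier_of V) \<le> 2"
    using card_mono[OF _ F] card_insert_le_m1[of 2 "{\<gamma> (t0+e)}" "\<gamma> (t0-e)"] by simp
  ultimately show "\<exists>V. openin (top_of_set \<Gamma>) V \<and> \<gamma> t0 \<in> V \<and> V \<subseteq> U \<and>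
      finite (top_of_set \<Gamma> frontier_of V) \<and> card (top_of_set \<Gamma> frontier_of V) \<le> 2"
    by blast
qed

lemma path_frontier_of_between:
  assumes "path \<gamma>" "path_image \<gamma> \<subseteq> \<Gamma>" "c \<in> {0..1}" "d \<in> {0..1}" "\<gamma> c \<in> V" "\<gamma> d \<notin> V"
  obtains s where "s \<in> closed_segment c d" "\<gamma> s \<in> (top_of_set \<Gamma>) frontier_of V"
proof -
  let ?S = "\<gamma> ` closed_segment c d"
  have seg: "closed_segment c d \<subseteq> {0..1}"
    using assms(3,4) by (simp add: closed_segment_eq_real_ivl)
  have "continuous_on (closed_segment c d) \<gamma>"
    using assms(1) seg unfolding path_def by (rule continuous_on_subset)
  then have "connected ?S" by (rule connected_continuous_image) simp
  moreover have "?S \<subseteq> \<Gamma>"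
    using assms(2) seg unfolding path_image_def by blast
  ultimately have "connectedin (top_of_set \<Gamma>) ?S"
    by (simp add: connectedin_subtopology)
  moreover have "?S \<inter> V \<noteq> {}" "?S - V \<noteq> {}"
    using assms(5,6) ends_in_segment[of c d] by blast+
  ultimately have "?S \<inter> (top_of_set \<Gamma>) frontier_of V \<noteq> {}"
    by (rule connectedin_Int_frontier_of)
  then show ?thesis using that by blast
qed

lemma free_arc_not_ord_le_1:
  assumes free: "free_arc \<Gamma> \<gamma>" and t0: "0 < t0" "t0 < 1"
  shows "\<not> ord_le \<Gamma> (\<gamma> t0) 1"
proof
  assume ord: "ord_le \<Gamma> (\<gamma> t0) 1"
  have path: "path \<gamma>" and sub: "path_image \<gamma> \<subseteq> \<Gamma>" and inj: "inj_on \<gamma> {0..1}"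
    using free unfolding free_arc_def arc_def by auto
  define a where "a = t0 / 2"
  define b where "b = (1 + t0) / 2"
  have ab: "0 < a" "a < t0" "t0 < b" "b < 1" using t0 unfolding a_def b_def by auto
  have "openin (top_of_set \<Gamma>) (\<gamma> ` {a<..<b})"
    using free ab unfolding free_arc_def by auto
  then obtain V where V: "openin (top_of_set \<Gamma>) V" "\<gamma> t0 \<in> V" "V \<subseteq> \<gamma> ` {a<..<b}"
     "finite ((top_of_set \<Gamma>) frontier_of V)" "card ((top_of_set \<Gamma>) frontier_of V) \<le> 1"
    using ord ab unfolding ord_le_def by force
  have "\<gamma> s \<notin> V" if "s \<in> {0..1}" "s \<notin> {a<..<b}" for s
    using V(3) that ab inj_onD[OF inj] by fastforce
  then have out: "\<gamma> a \<notin> V" "\<gamma> b \<notin> V" using ab by auto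
  have "\<gamma> s \<notin> V" if "\<gamma> s \<in> (top_of_set \<Gamma>) frontier_of V" for s
    using that V(1) by (simp add: frontier_of_def interior_of_openin)
  \<comment> \<open>V lies in the open sub-arc, so it has a frontier point on each side of \<open>\<gamma> t0\<close>.\<close>
  moreover obtain s1 where s1: "s1 \<in> {t0..b}" "\<gamma> s1 \<in> (top_of_set \<Gamma>) frontier_of V"
    using path_frontier_of_between[OF path sub _ _ V(2) out(2)] t0 ab
    by (auto simp: closed_segment_eq_real_ivl)
  moreover obtain s2 where s2: "s2 \<in> {a..t0}" "\<gamma> s2 \<in> (top_of_set \<Gamma>) frontier_of V"
    using path_frontier_of_between[OF path sub _ _ V(2) out(1)] t0 ab
    by (auto simp: closed_segment_eq_real_ivl)
  ultimately have "s2 < s1" using V(2) by (metis atLeastAtMost_iff order_le_less order.strict_trans1)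
  then have "\<gamma> s1 \<noteq> \<gamma> s2" using s1(1) s2(1) ab inj_onD[OF inj] by fastforce
  then have "2 \<le> card ((top_of_set \<Gamma>) frontier_of V)"
    using s1(2) s2(2) V(4) card_mono[of _ "{\<gamma> s1, \<gamma> s2}"] by fastforce
  then show False using V(5) by simp
qed

lemma free_arc_point_order_2:
  assumes "free_arc \<Gamma> \<gamma>" "0 < t0" "t0 < 1"
  shows "point_order \<Gamma> (\<gamma> t0) 2"
proof -
  have "\<not> ord_le \<Gamma> (\<gamma> t0) m" if "m < 2" for m
    using free_arc_not_ord_le_1[OF assms] ord_le_mono[of \<Gamma> "\<gamma> t0" m 1] that by auto
  then show ?thesis
    unfolding point_order_def using free_arc_ord_le_2[OF assms] by blast
qed

lemma graph_openin_contains_open_2_star: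
  assumes "is_graph \<Gamma>" "openin (top_of_set \<Gamma>) V" "V \<noteq> {}"
  obtains y S where "y \<in> S" "S \<subseteq> V" "openin (top_of_set \<Gamma>) S" "is_open_star y 2 S"
    "point_order \<Gamma> y 2"
proof -
  obtain n and g :: "nat \<Rightarrow> real \<Rightarrow> _" where arcs: "\<forall>i<n. arc (g i)"
    and \<Gamma>: "\<Gamma> = (\<Union>i<n. path_image (g i))"
    and meet: "\<forall>i<n. \<forall>j<n. i \<noteq> j \<longrightarrow> path_image (g i) \<inter> path_image (g j)
                 \<subseteq> {pathstart (g i), pathfinish (g i)} \<inter> {pathstart (g j), pathfinish (g j)}"
    using assms(1) unfolding is_graph_def by blast
  obtain Ov where "open Ov" and V_eq: "V = \<Gamma> \<inter> Ov" using assms(2) unfolding openin_open by blast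
  obtain v where "v \<in> V" using assms(3) by blast
  then obtain i where i: "i < n" "path_image (g i) \<inter> Ov \<noteq> {}"
    using \<Gamma> V_eq by blast
  have free: "free_arc \<Gamma> (g i)" by (rule graph_edge_free_arc[OF arcs \<Gamma> meet i(1)])
  then have "path (g i)" "path_image (g i) \<subseteq> \<Gamma>" unfolding free_arc_def arc_def by auto
  then obtain t0 where t0: "0 < t0" "t0 < 1" "g i t0 \<in> Ov"
    using path_interior_point_in_open[OF _ \<open>open Ov\<close> i(2)] by blast
  then have "g i t0 \<in> path_image (g i)" unfolding path_image_def by simp
  with t0 \<open>path_image (g i) \<subseteq> \<Gamma>\<close> have "g i t0 \<in> V" using V_eq by blast
  then obtain e where e: "0 < e" "0 < t0 - e" "t0 + e < 1" "g i ` {t0-e..t0+e} \<subseteq> V"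
    using free_arc_interval_in_openin[OF free assms(2) t0(1,2)] by blast
  show ?thesis
  proof (rule that)
    show "g i t0 \<in> g i ` {t0-e<..<t0+e}" using e(1) by simp
    show "g i ` {t0-e<..<t0+e} \<subseteq> V" using e(4) by auto
    show "openin (top_of_set \<Gamma>) (g i ` {t0-e<..<t0+e})"
      using free e unfolding free_arc_def by auto
    show "is_open_star (g i t0) 2 (g i ` {t0-e<..<t0+e})"
      using e arcs i(1) by (intro is_open_star_arc_interval) auto
    show "point_order \<Gamma> (g i t0) 2" by (rule free_arc_point_order_2[OF free t0(1,2)])
  qed
qed

lemma ssl_point_product_open_2_star:
  assumes "openin (top_of_set U) Ob" "b \<in> Ob" "openin (top_of_set \<Gamma>) S" "y \<in> S"
    and star: "is_open_star y 2 S" and "point_order \<Gamma> y 2" and sub: "Ob \<times> S \<subseteq> M'"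
  shows "ssl_point U \<Gamma> M' (b, y)"
proof -
  have "S \<subseteq> \<Gamma>" using assms(3) by (rule openin_imp_subset)
  have full: "full_substar y 2 S S"
    using star unfolding is_open_star_def full_substar_def by blast
  have fibre: "M' \<inter> (Ob \<times> S) \<inter> ({z} \<times> \<Gamma>) = {z} \<times> S" if "z \<in> Ob" for z
    using sub that \<open>S \<subseteq> \<Gamma>\<close> by blast
  show ?thesis
    unfolding ssl_point_def Let_def fst_conv snd_conv
  proof (intro conjI exI[of _ "2::nat"] exI[of _ Ob] exI[of _ S] ballI order_refl full)
    show "M' \<inter> (Ob \<times> S) \<inter> ({b} \<times> \<Gamma>) = {b} \<times> S" by (rule fibre[OF assms(2)])
    fix z assume "z \<in> fst ` (M' \<inter> (Ob \<times> S))"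
    then show "M' \<inter> (Ob \<times> S) \<inter> ({z} \<times> \<Gamma>) = {z} \<times> S" by (intro fibre) auto
  qed (use assms \<open>S \<subseteq> \<Gamma>\<close> in blast)+
qed

lemma bundle_chart_image_openin:
  assumes "bundle_chart E B p \<Gamma> U h" "openin (top_of_set E) W"
  shows "openin (top_of_set (U \<times> \<Gamma>)) (h ` (W \<inter> p -` U))"
proof -
  obtain k where hom: "homeomorphism (E \<inter> p -` U) (U \<times> \<Gamma>) h k"
    using assms(1) unfolding bundle_chart_def by blast
  obtain T where "open T" "W = E \<inter> T" using assms(2) unfolding openin_open by blast
  then have "openin (top_of_set (E \<inter> p -` U)) (W \<inter> p -` U)"
    by (auto simp: openin_open)
  then show ?thesis
    using homeomorphism_imp_open_map[OF hom] by blast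
qed

lemma Lint_s_meets_openin:
  assumes graph_bundle: "compact_graph_bundle E B p \<Gamma>"
    and W: "openin (top_of_set E) W" "W \<subseteq> M" "w \<in> W"
  shows "W \<inter> Lint_s E B p \<Gamma> M \<noteq> {}"
proof -
  have graph: "is_graph \<Gamma>" and "p ` E = B"
    and charts: "\<forall>b\<in>B. \<exists>U h. b \<in> U \<and> bundle_chart E B p \<Gamma> U h"
    using graph_bundle unfolding compact_graph_bundle_def by blast+
  have "w \<in> E" using W(1,3) openin_imp_subset by blast
  then have "p w \<in> B" using \<open>p ` E = B\<close> by blast
  then obtain U h where U: "p w \<in> U" and chart: "bundle_chart E B p \<Gamma> U h"
    using charts by blast
  have "(fst (h w), snd (h w)) \<in> h ` (W \<inter> p -` U)" using W(3) U by simp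
  then obtain Ob V where Ob: "openin (top_of_set U) Ob" "fst (h w) \<in> Ob"
    and V: "openin (top_of_set \<Gamma>) V" "snd (h w) \<in> V" and prod: "Ob \<times> V \<subseteq> h ` (W \<inter> p -` U)"
    by (rule Times_in_interior_subtopology[OF _ bundle_chart_image_openin[OF chart W(1)]])
  have "V \<noteq> {}" using V(2) by blast
  then obtain y S where S: "y \<in> S" "S \<subseteq> V" "openin (top_of_set \<Gamma>) S" "is_open_star y 2 S"
    "point_order \<Gamma> y 2"
    by (rule graph_openin_contains_open_2_star[OF graph V(1)])
  have "Ob \<times> S \<subseteq> Ob \<times> V" using S(2) by blast
  also have "\<dots> \<subseteq> h ` (W \<inter> p -` U)" by (rule prod)
  also have "\<dots> \<subseteq> h ` (M \<inter> p -` U)" using W(2) by blast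
  finally have ssl: "ssl_point U \<Gamma> (h ` (M \<inter> p -` U)) (fst (h w), y)"
    by (rule ssl_point_product_open_2_star[OF Ob S(3,1,4,5)])
  have "(fst (h w), y) \<in> Ob \<times> V" using Ob(2) S(1,2) by blast
  then have "(fst (h w), y) \<in> h ` (W \<inter> p -` U)" using prod by blast
  then obtain x where x: "x \<in> W \<inter> p -` U" "h x = (fst (h w), y)" by (metis imageE)
  have "x \<in> M" "p x \<in> U" using x(1) W(2) by auto
  moreover have "ssl_point U \<Gamma> (h ` (M \<inter> p -` U)) (h x)" using ssl x(2) by simp
  ultimately have "x \<in> Lint_s E B p \<Gamma> M"
    unfolding Lint_s_def using chart by blast
  then show ?thesis using x(1) by blast
qed

theorem lemma9:
  fixes E :: "'e::metric_space set" and B :: "'b::metric_space set"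
    and p :: "'e \<Rightarrow> 'b" and \<Gamma> :: "'g::metric_space set" and M :: "'e set"
  assumes "compact_graph_bundle E B p \<Gamma>"
    and "M \<subseteq> E" and "compact M"
    and "End_s E B p \<Gamma> M = M"
  shows "nowhere_dense_in E M"
proof -
  have "closedin (top_of_set E) M"
    using assms(2,3) by (simp add: closed_subset compact_imp_closed)
  then have closure: "(top_of_set E) closure_of M = M" by (rule closure_of_closedin)
  have no_Lint: "M \<inter> Lint_s E B p \<Gamma> M = {}"
    using assms(4) unfolding End_s_def by blast
  have "w \<notin> (top_of_set E) interior_of M" for w
  proof
    assume "w \<in> (top_of_set E) interior_of M"
    then have "(top_of_set E) interior_of M \<inter> Lint_s E B p \<Gamma> M \<noteq> {}"
      by (rule Lint_s_meets_openin[OF assms(1) openin_interior_of interior_of_subset])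
    then show False using no_Lint interior_of_subset[of "top_of_set E" M] by blast
  qed
  then show ?thesis unfolding nowhere_dense_in_def closure by blast
qed

end
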